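(* $2^6\rightarrow 167\rightrightarrows 19$: there is an injective isotone map $\varphi:\mathbf 2^6\to F_4^-$ such that $\{\varphi(x)[p_1:=e]: x\in\mathbf 2^6,\ e\in\{0,1\}\}\supseteq F_3^-$. In particular there is an injective isotone map from $\mathbf 2^6$ into $F_4$.
   Context: $F_k$ is the set of monotone Boolean functions of $k$ variables $p_1,\dots,p_k$ (including constants $0,1$), ordered pointwise; $F_k^-=F_k\setminus\{0\}$. For $g\in F_k$ and $e\in\{0,1\}$, $g[p_1:=e]$ is the function of $p_2,\dots,p_k$ obtained by substituting $e$ for $p_1$. $\mathbf 2^i$ is $\{0,1\}^i$ with the coordinatewise order; isotone means order-preserving. Notation: $2^i\rightarrow|F_j^-|\rightrightarrows|F_{j-1}^-|$ means there is an injective isotone $\varphi:\mathbf 2^i\to F_j^-$ such that every element of $F_{j-1}^-$ equals $\varphi(x)[p_1:=e]$ for some $x$, $e$. Here $|F_3^-|=19$, $|F_4^-|=167$. *)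

theory Defs
  imports Main
begin

text \<open>Boolean functions of k variables p_1,...,p_k are represented as predicates on
bool lists; an assignment is a list of length k whose i-th entry (0-based) is the
value of p_(i+1). To make the representation canonical, the function is False on
lists of any other length.\<close>

definition cube :: "nat \<Rightarrow> bool list set" where
  "cube k = {xs. length xs = k}"

definition cube_le :: "bool list \<Rightarrow> bool list \<Rightarrow> bool" where
  "cube_le xs ys \<longleftrightarrow> list_all2 (\<le>) xs ys"

definition F :: "nat \<Rightarrow> (bool list \<Rightarrow> bool) set" where
  "F k = {f. (\<forall>xs. length xs \<noteq> k \<longrightarrow> \<not> f xs) \<and>
             (\<forall>xs\<in>cube k. \<forall>ys\<in>cube k. cube_le xs ys \<longrightarrow> f xs \<longrightarrow> f ys)}"

definition Fminus :: "nat \<Rightarrow> (bool list \<Rightarrow> bool) set" where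
  "Fminus k = F k - {\<lambda>_. False}"

text \<open>g[p_1 := e]: a function of the remaining variables p_2,...,p_k.\<close>
definition subst1 :: "(bool list \<Rightarrow> bool) \<Rightarrow> bool \<Rightarrow> (bool list \<Rightarrow> bool)" where
  "subst1 g e = (\<lambda>ys. g (e # ys))"

definition isotone_on_cube :: "nat \<Rightarrow> (bool list \<Rightarrow> 'b::ord) \<Rightarrow> bool" where
  "isotone_on_cube i \<phi> \<longleftrightarrow>
     (\<forall>x\<in>cube i. \<forall>y\<in>cube i. cube_le x y \<longrightarrow> \<phi> x \<le> \<phi> y)"

text \<open>2^i \<rightarrow> |F_j^-| \<rightrightarrows> |F_(j-1)^-|\<close>
definition arrows :: "nat \<Rightarrow> nat \<Rightarrow> bool" where
  "arrows i j \<longleftrightarrow> (\<exists>\<phi>. inj_on \<phi> (cube i) \<and> isotone_on_cube i \<phi> \<and>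
       \<phi> ` cube i \<subseteq> Fminus j \<and>
       (\<forall>g\<in>Fminus (j - 1). \<exists>x\<in>cube i. \<exists>e. g = subst1 (\<phi> x) e))"

end

theory Submission
  imports Defs
begin

text \<open>The map \<open>\<phi> = edge_code\<close> lets bit \<open>k\<close> of \<open>x \<in> 2\<^sup>6\<close> switch on the \<open>k\<close>-th of the six
conjunctions \<open>p\<^sub>i p\<^sub>j\<close>, so it is injective and isotone. Setting \<open>p\<^sub>1 := 1\<close> turns the three
conjunctions containing \<open>p\<^sub>1\<close> into the single variables \<open>p\<^sub>2, p\<^sub>3, p\<^sub>4\<close> and leaves the other
three as pairs; together with \<open>p\<^sub>2 p\<^sub>3 p\<^sub>4\<close>, coming from \<open>p\<^sub>1 p\<^sub>2 p\<^sub>3 p\<^sub>4\<close>, these restrictions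
give every nonzero monotone function of three variables vanishing at \<open>000\<close>: let \<open>x\<close> mark its
minimal true points. The remaining function, the constant \<open>1\<close>, is the image of the top
element \<open>111111\<close>, which \<open>\<phi>\<close> sends to the constant \<open>1\<close>.\<close>

definition edge_code :: "bool list \<Rightarrow> bool list \<Rightarrow> bool" where
  "edge_code x ys \<longleftrightarrow> length ys = 4 \<and>
     ((x!0 \<and> x!1 \<and> x!2 \<and> x!3 \<and> x!4 \<and> x!5) \<or> (ys!0 \<and> ys!1 \<and> ys!2 \<and> ys!3)
      \<or> (x!0 \<and> ys!0 \<and> ys!1) \<or> (x!1 \<and> ys!0 \<and> ys!2) \<or> (x!2 \<and> ys!0 \<and> ys!3)
      \<or> (x!3 \<and> ys!1 \<and> ys!2) \<or> (x!4 \<and> ys!1 \<and> ys!3) \<or> (x!5 \<and> ys!2 \<and> ys!3))"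

lemma cube_le_iff_nth:
  assumes "length xs = n" "length ys = n"
  shows "cube_le xs ys \<longleftrightarrow> (\<forall>i<n. xs!i \<longrightarrow> ys!i)"
  using assms by (auto simp: cube_le_def list_all2_conv_all_nth le_bool_def)

lemma cube_le_refl: "cube_le xs xs"
  by (simp add: cube_le_def list.rel_refl)

lemma edge_code_mono:
  assumes "cube_le x x'" "length x = 6" "cube_le ys ys'" "edge_code x ys"
  shows "edge_code x' ys'"
proof -
  have "length ys = 4" using \<open>edge_code x ys\<close> by (simp add: edge_code_def)
  moreover have "length x' = 6" "length ys' = length ys"
    using assms(1-3) by (auto simp: cube_le_def list_all2_lengthD)
  ultimately have "\<forall>i<6. x!i \<longrightarrow> x'!i" "\<forall>i<4. ys!i \<longrightarrow> ys'!i"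
    using assms(1,3) cube_le_iff_nth[of x 6 x'] cube_le_iff_nth[of ys 4 ys'] assms(2) by simp_all
  then have "x!0 \<longrightarrow> x'!0" "x!1 \<longrightarrow> x'!1" "x!2 \<longrightarrow> x'!2" "x!3 \<longrightarrow> x'!3"
      "x!4 \<longrightarrow> x'!4" "x!5 \<longrightarrow> x'!5"
      "ys!0 \<longrightarrow> ys'!0" "ys!1 \<longrightarrow> ys'!1" "ys!2 \<longrightarrow> ys'!2" "ys!3 \<longrightarrow> ys'!3"
    by simp_all
  with \<open>edge_code x ys\<close> \<open>length ys' = length ys\<close> show ?thesis
    unfolding edge_code_def by (elim conjE disjE) simp_all
qed

lemma edge_code_in_Fminus:
  assumes "length x = 6"
  shows "edge_code x \<in> Fminus 4"
proof -
  have "edge_code x \<in> F 4"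
    unfolding F_def
  proof (intro CollectI conjI allI ballI impI)
    fix ys ys' assume "cube_le ys ys'" "edge_code x ys"
    then show "edge_code x ys'" using edge_code_mono[OF cube_le_refl assms] by blast
  qed (simp add: edge_code_def)
  moreover have "edge_code x [True, True, True, True]" by (simp add: edge_code_def)
  ultimately show ?thesis by (auto simp: Fminus_def)
qed

lemma isotone_edge_code: "isotone_on_cube 6 edge_code"
  unfolding isotone_on_cube_def le_fun_def le_bool_def cube_def
  using edge_code_mono[OF _ _ cube_le_refl] by blast

lemma inj_on_edge_code: "inj_on edge_code (cube 6)"
proof (rule inj_onI)
  fix x y assume "x \<in> cube 6" "y \<in> cube 6" and eq: "edge_code x = edge_code y"
  have bits:
    "edge_code z [True, True, False, False] = z!0" "edge_code z [True, False, True, False] = z!1"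
    "edge_code z [True, False, False, True] = z!2" "edge_code z [False, True, True, False] = z!3"
    "edge_code z [False, True, False, True] = z!4" "edge_code z [False, False, True, True] = z!5"
    for z by (auto simp: edge_code_def)
  have "x!0 = y!0" "x!1 = y!1" "x!2 = y!2" "x!3 = y!3" "x!4 = y!4" "x!5 = y!5"
    using bits[of x] bits[of y] eq by simp_all
  with \<open>x \<in> cube 6\<close> \<open>y \<in> cube 6\<close> show "x = y"
    by (auto simp: cube_def numeral_eq_Suc less_Suc_eq intro!: nth_equalityI)
qed

lemma F_3_mono:
  assumes "g \<in> F 3" "g [a, b, c]" "a \<longrightarrow> a'" "b \<longrightarrow> b'" "c \<longrightarrow> c'"
  shows "g [a', b', c']"
proof -
  have "cube_le [a, b, c] [a', b', c']" using assms(3-5) by (auto simp: cube_le_def)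
  then show ?thesis using assms(1,2) by (auto simp: F_def cube_def)
qed

lemma F_3_eqI:
  assumes "g \<in> F 3" "\<And>ys. length ys \<noteq> 3 \<Longrightarrow> \<not> h ys" "\<And>u v w. g [u, v, w] = h [u, v, w]"
  shows "g = h"
proof
  fix ys show "g ys = h ys"
  proof (cases "length ys = 3")
    case True
    then obtain u v w where "ys = [u, v, w]" by (auto simp: numeral_3_eq_3 length_Suc_conv)
    then show ?thesis using assms(3) by simp
  qed (use assms(1,2) in \<open>auto simp: F_def\<close>)
qed

lemma Fminus_3_top:
  assumes "g \<in> Fminus 3"
  shows "g [True, True, True]"
proof (rule ccontr)
  assume "\<not> g [True, True, True]"
  then have "g = (\<lambda>_. False)"
    using assms F_3_mono[of g _ _ _ True True True] by (intro F_3_eqI) (auto simp: Fminus_def)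
  then show False using assms by (simp add: Fminus_def)
qed

lemma subst1_edge_code_True:
  "subst1 (edge_code x) True [u, v, w] \<longleftrightarrow>
     (x!0 \<and> x!1 \<and> x!2 \<and> x!3 \<and> x!4 \<and> x!5) \<or> (u \<and> v \<and> w)
     \<or> (x!0 \<and> u) \<or> (x!1 \<and> v) \<or> (x!2 \<and> w) \<or> (x!3 \<and> u \<and> v) \<or> (x!4 \<and> u \<and> w) \<or> (x!5 \<and> v \<and> w)"
  by (simp add: subst1_def edge_code_def)

lemma Fminus_3_restriction_edge_code:
  assumes "g \<in> Fminus 3"
  shows "\<exists>x\<in>cube 6. g = subst1 (edge_code x) True"
proof -
  have g: "g \<in> F 3" using assms by (simp add: Fminus_def)
  have off: "\<not> subst1 (edge_code x) True ys" if "length ys \<noteq> 3" for x ys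
    using that by (simp add: subst1_def edge_code_def)
  show ?thesis
  proof (cases "g [False, False, False]")
    case True
    let ?x = "replicate 6 True"
    have "g = subst1 (edge_code ?x) True"
      using g off True F_3_mono[OF g True]
      by (intro F_3_eqI) (auto simp: subst1_edge_code_True numeral_eq_Suc)
    then show ?thesis by (intro bexI[of _ ?x]) (auto simp: cube_def)
  next
    case False
    define a b c where "a = g [True, False, False]" "b = g [False, True, False]" "c = g [False, False, True]"
    define d e f where "d = g [True, True, False]" "e = g [True, False, True]" "f = g [False, True, True]"
    \<comment> \<open>A pair is kept only if it is a minimal true point, so \<open>?x\<close> is never all-ones.\<close>
    let ?x = "[a, b, c, d \<and> \<not> a \<and> \<not> b, e \<and> \<not> a \<and> \<not> c, f \<and> \<not> b \<and> \<not> c]"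
    have "a \<longrightarrow> d" "a \<longrightarrow> e" "b \<longrightarrow> d" "b \<longrightarrow> f" "c \<longrightarrow> e" "c \<longrightarrow> f"
      unfolding a_b_c_def d_e_f_def using F_3_mono[OF g] by blast+
    moreover have "g [True, True, True]" using assms Fminus_3_top by blast
    ultimately have "g [u, v, w] = subst1 (edge_code ?x) True [u, v, w]" for u v w
      using False unfolding subst1_edge_code_True a_b_c_def d_e_f_def
      by (cases u; cases v; cases w) auto
    then have "g = subst1 (edge_code ?x) True"
      using g off by (intro F_3_eqI)
    then show ?thesis by (intro bexI[of _ ?x]) (auto simp: cube_def)
  qed
qed

theorem mainTheorem10:
  shows "arrows 6 4 \<and>
    (\<exists>\<phi>. inj_on \<phi> (cube 6) \<and> isotone_on_cube 6 \<phi> \<and> \<phi> ` cube 6 \<subseteq> F 4)"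
proof -
  have image: "edge_code ` cube 6 \<subseteq> Fminus 4"
    using edge_code_in_Fminus by (auto simp: cube_def)
  moreover have "\<forall>g\<in>Fminus 3. \<exists>x\<in>cube 6. \<exists>e. g = subst1 (edge_code x) e"
    using Fminus_3_restriction_edge_code by blast
  ultimately have "arrows 6 4"
    unfolding arrows_def using inj_on_edge_code isotone_edge_code by (intro exI[of _ edge_code]) simp
  moreover have "edge_code ` cube 6 \<subseteq> F 4"
    using image by (auto simp: Fminus_def)
  ultimately show ?thesis
    using inj_on_edge_code isotone_edge_code by blast
qed

end
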